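(* For every integer $n\ge 0$, $$\Phi^{(1)}[a; b, b'; cq^{-n}; x, y] = \frac{1}{(q/c; q)_n} \sum_{k=0}^n \begin{bmatrix} n \\ k \end{bmatrix} (-c)^{k-n} q^{\binom{n+1-k}{2}} \Phi^{(1)}[a; b, b'; c; xq^k, yq^k]$$ and $$\Phi^{(1)}[a; b, b'; cq^n; x, y] = \sum_{k=0}^n \begin{bmatrix} n \\ k \end{bmatrix} c^k q^{2\binom{k}{2}} (cq^k; q)_{n-k}\, \Phi^{(1)}[a; b, b'; cq^k; xq^k, yq^k].$$
   Context: Let $q$ be a complex number with $0<|q|<1$. For complex $z$ and integer $m\ge 0$, $(z;q)_m=\prod_{j=0}^{m-1}(1-zq^j)$, with $(z;q)_0=1$. For integers $0\le k\le n$, $\begin{bmatrix} n \\ k \end{bmatrix}=\frac{(q;q)_n}{(q;q)_k(q;q)_{n-k}}$ is the $q$-binomial coefficient, and $\binom{j}{2}=j(j-1)/2$. The $q$-Appell function $\Phi^{(1)}$ is $$\Phi^{(1)}[a; b, b'; c; x, y] = \sum_{m, n \geq 0} \frac{(a; q)_{m+n} (b; q)_m (b'; q)_n}{(q; q)_m (q; q)_n (c; q)_{m+n}} x^m y^n.$$ Identities are understood as identities of power series in $x,y$ (formal, or convergent for small $|x|,|y|$), with complex parameters chosen so that no denominator occurring vanishes. *)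

theory Defs
  imports "HOL-Analysis.Analysis"
begin

definition qpoch :: "complex \<Rightarrow> complex \<Rightarrow> nat \<Rightarrow> complex" where
  "qpoch z q m = (\<Prod>j<m. (1 - z * q ^ j))"

definition qbinom :: "complex \<Rightarrow> nat \<Rightarrow> nat \<Rightarrow> complex" where
  "qbinom q n k = qpoch q q n / (qpoch q q k * qpoch q q (n - k))"

definition qAppell1 :: "complex \<Rightarrow> complex \<Rightarrow> complex \<Rightarrow> complex \<Rightarrow> complex \<Rightarrow> complex \<Rightarrow> complex \<Rightarrow> complex" where
  "qAppell1 q a b b' c x y =
     (\<Sum>\<^sub>\<infinity>(i, j)\<in>UNIV.
        qpoch a q (i + j) * qpoch b q i * qpoch b' q j
        / (qpoch q q i * qpoch q q j * qpoch c q (i + j)) * x ^ i * y ^ j)"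

end

theory Submission
  imports Defs
begin

text \<open>
  The coefficient of \<open>x^i y^j\<close> in \<open>\<Phi>(a; b, b'; c; x, y)\<close> depends on \<open>c\<close> only through the
  factor \<open>1 / (c; q)_(i+j)\<close>. Both identities are therefore linear consequences of scalar
  identities expressing \<open>1 / (c q^-n; q)_N\<close> and \<open>1 / (c q^n; q)_N\<close> as finite combinations of
  \<open>q^(k N) / (c'; q)_N\<close>, where the factor \<open>q^(k N) = q^(k (i + j))\<close> is absorbed by the
  arguments \<open>x q^k\<close> and \<open>y q^k\<close>. The scalar identities come from the finite q-binomial theorem
  and from the q-analogue \<open>\<Sum>k. [n, k] d^k q^(k (k - 1)) (d q^k; q)_(n-k) = 1\<close> of
  \<open>\<Sum>k. C(n, k) d^k (1 - d)^(n-k) = 1\<close>, both proved by induction with the q-Pascal rules.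
  Exchanging the finite sum with the double series needs absolute convergence near the origin,
  uniformly in the shifts \<open>c q^m\<close>: the factors \<open>1 - c q^j\<close> are bounded away from \<open>0\<close>, so the
  coefficients grow at most geometrically.
\<close>

section \<open>q-Pochhammer symbols and q-binomial coefficients\<close>

lemma qpoch_0 [simp]: "qpoch z q 0 = 1"
  by (simp add: qpoch_def)

lemma qpoch_Suc: "qpoch z q (Suc m) = qpoch z q m * (1 - z * q ^ m)"
  by (simp add: qpoch_def)

lemma qpoch_add: "qpoch z q (m + n) = qpoch z q m * qpoch (z * q ^ m) q n"
  by (induction n) (simp_all add: qpoch_Suc power_add mult_ac)

lemma qpoch_factor_nonzero: "qpoch z q (Suc j) \<noteq> 0 \<Longrightarrow> 1 - z * q ^ j \<noteq> 0"
  by (simp add: qpoch_Suc)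

lemma qpoch_q_q_nonzero:
  assumes "norm q < 1"
  shows "qpoch q q m \<noteq> 0"
proof -
  have "q ^ Suc j \<noteq> 1" for j
    using power_less_one_iff[of "norm q" "Suc j"] assms
    by (metis norm_one norm_power norm_ge_zero order.irrefl zero_less_Suc)
  then show ?thesis
    by (simp add: qpoch_def)
qed

lemma qbinom_0_right: "qpoch q q n \<noteq> 0 \<Longrightarrow> qbinom q n 0 = 1"
  by (simp add: qbinom_def)

lemma qbinom_diag: "qpoch q q n \<noteq> 0 \<Longrightarrow> qbinom q n n = 1"
  by (simp add: qbinom_def)

lemma qbinom_Suc_Suc:
  assumes qq: "\<And>m. qpoch q q m \<noteq> 0" and "k < n"
  shows "qbinom q (Suc n) (Suc k) = qbinom q n (Suc k) + q ^ (n - k) * qbinom q n k"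
    and "qbinom q (Suc n) (Suc k) = q ^ Suc k * qbinom q n (Suc k) + qbinom q n k"
proof -
  obtain m where n: "n = Suc k + m"
    using \<open>k < n\<close> less_iff_Suc_add by blast
  define A B u v where "A = qpoch q q k" and "B = qpoch q q m"
    and "u = 1 - q ^ Suc k" and "v = 1 - q ^ Suc m"
  have nz: "A \<noteq> 0" "B \<noteq> 0" "u \<noteq> 0" "v \<noteq> 0"
    unfolding A_def B_def u_def v_def using qq qpoch_factor_nonzero by auto
  have pow: "q ^ Suc n = (1 - u) * (1 - v)" "q ^ (n - k) = 1 - v" "q ^ Suc k = 1 - u"
    by (simp_all add: n u_def v_def power_add)
  have diff: "Suc n - Suc k = Suc m" "n - Suc k = m" "n - k = Suc m"
    using n by simp_all
  have qbinoms: "qbinom q (Suc n) (Suc k) = qpoch q q n * (1 - q ^ Suc n) / (A * u * (B * v))"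
    "qbinom q n (Suc k) = qpoch q q n / (A * u * B)"
    "qbinom q n k = qpoch q q n / (A * (B * v))"
    by (simp_all only: qbinom_def diff qpoch_Suc A_def B_def u_def v_def power_Suc)
  show "qbinom q (Suc n) (Suc k) = qbinom q n (Suc k) + q ^ (n - k) * qbinom q n k"
    and "qbinom q (Suc n) (Suc k) = q ^ Suc k * qbinom q n (Suc k) + qbinom q n k"
    unfolding qbinoms pow using nz by (simp_all add: field_simps)
qed

lemma sum_qbinom_Suc:
  assumes qq: "\<And>m. qpoch q q m \<noteq> 0"
  shows "(\<Sum>k\<le>Suc n. qbinom q (Suc n) k * f k) =
    (\<Sum>k\<le>n. qbinom q n k * f k) + (\<Sum>k\<le>n. q ^ (n - k) * qbinom q n k * f (Suc k))"
proof -
  have "(\<Sum>k\<le>Suc n. qbinom q (Suc n) k * f k) =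
      f 0 + (\<Sum>k<n. qbinom q (Suc n) (Suc k) * f (Suc k)) + f (Suc n)"
    by (subst sum.atMost_Suc_shift) (simp add: qbinom_0_right qbinom_diag qq flip: lessThan_Suc_atMost)
  also have "(\<Sum>k<n. qbinom q (Suc n) (Suc k) * f (Suc k)) =
      (\<Sum>k<n. qbinom q n (Suc k) * f (Suc k)) + (\<Sum>k<n. q ^ (n - k) * qbinom q n k * f (Suc k))"
    by (simp add: qbinom_Suc_Suc(1)[OF qq] sum.distrib[symmetric] algebra_simps)
  moreover have "(\<Sum>k\<le>n. qbinom q n k * f k) = f 0 + (\<Sum>k<n. qbinom q n (Suc k) * f (Suc k))"
    by (simp add: sum.atMost_shift qbinom_0_right qq)
  moreover have "(\<Sum>k\<le>n. q ^ (n - k) * qbinom q n k * f (Suc k)) =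
      (\<Sum>k<n. q ^ (n - k) * qbinom q n k * f (Suc k)) + f (Suc n)"
    by (simp add: qbinom_diag qq flip: lessThan_Suc_atMost)
  ultimately show ?thesis
    by (simp add: algebra_simps)
qed

lemma sum_qbinom_Suc':
  assumes qq: "\<And>m. qpoch q q m \<noteq> 0"
  shows "(\<Sum>k\<le>Suc n. qbinom q (Suc n) k * f k) =
    (\<Sum>k\<le>n. q ^ k * qbinom q n k * f k) + (\<Sum>k\<le>n. qbinom q n k * f (Suc k))"
proof -
  have "(\<Sum>k\<le>Suc n. qbinom q (Suc n) k * f k) =
      f 0 + (\<Sum>k<n. qbinom q (Suc n) (Suc k) * f (Suc k)) + f (Suc n)"
    by (subst sum.atMost_Suc_shift) (simp add: qbinom_0_right qbinom_diag qq flip: lessThan_Suc_atMost)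
  also have "(\<Sum>k<n. qbinom q (Suc n) (Suc k) * f (Suc k)) =
      (\<Sum>k<n. q ^ Suc k * qbinom q n (Suc k) * f (Suc k)) + (\<Sum>k<n. qbinom q n k * f (Suc k))"
    by (simp add: qbinom_Suc_Suc(2)[OF qq] sum.distrib[symmetric] algebra_simps)
  moreover have "(\<Sum>k\<le>n. q ^ k * qbinom q n k * f k) =
      f 0 + (\<Sum>k<n. q ^ Suc k * qbinom q n (Suc k) * f (Suc k))"
    by (simp add: sum.atMost_shift qbinom_0_right qq)
  moreover have "(\<Sum>k\<le>n. qbinom q n k * f (Suc k)) = (\<Sum>k<n. qbinom q n k * f (Suc k)) + f (Suc n)"
    by (simp add: qbinom_diag qq flip: lessThan_Suc_atMost)
  ultimately show ?thesis
    by (simp add: algebra_simps)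
qed

lemma choose_2_Suc: "Suc k choose 2 = k + (k choose 2)"
  by (simp add: numeral_2_eq_2)

lemma sum_qbinom_qpoch_eq_1:
  assumes qq: "\<And>m. qpoch q q m \<noteq> 0"
  shows "(\<Sum>k\<le>n. qbinom q n k * (d ^ k * q ^ (2 * (k choose 2)) * qpoch (d * q ^ k) q (n - k))) = 1"
proof (induction n arbitrary: d)
  case 0
  then show ?case
    by (simp add: qbinom_0_right qq numeral_2_eq_2)
next
  case (Suc n)
  let ?f = "\<lambda>N d k. d ^ k * q ^ (2 * (k choose 2)) * qpoch (d * q ^ k) q (N - k)"
  have "(\<Sum>k\<le>n. qbinom q n k * ?f (Suc n) d k) = (1 - d * q ^ n) * (\<Sum>k\<le>n. qbinom q n k * ?f n d k)"
    unfolding sum_distrib_left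
  proof (rule sum.cong[OF refl])
    fix k assume "k \<in> {..n}"
    then have "Suc n - k = Suc (n - k)" and "d * q ^ k * q ^ (n - k) = d * q ^ n"
      by (simp_all add: Suc_diff_le mult.assoc flip: power_add)
    then show "qbinom q n k * ?f (Suc n) d k = (1 - d * q ^ n) * (qbinom q n k * ?f n d k)"
      by (simp add: qpoch_Suc mult_ac)
  qed
  moreover have "(\<Sum>k\<le>n. q ^ (n - k) * qbinom q n k * ?f (Suc n) d (Suc k)) =
      d * q ^ n * (\<Sum>k\<le>n. qbinom q n k * ?f n (d * q) k)"
    unfolding sum_distrib_left
  proof (rule sum.cong[OF refl])
    fix k assume "k \<in> {..n}"
    then have "q ^ (n - k) * q ^ (2 * (Suc k choose 2)) = q ^ n * q ^ k * q ^ (2 * (k choose 2))"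
      by (simp add: choose_2_Suc add_ac flip: power_add)
    then show "q ^ (n - k) * qbinom q n k * ?f (Suc n) d (Suc k) = d * q ^ n * (qbinom q n k * ?f n (d * q) k)"
      by (simp add: power_mult_distrib mult_ac)
  qed
  ultimately show ?case
    using sum_qbinom_Suc[OF qq, of n "?f (Suc n) d"] Suc.IH[of d] Suc.IH[of "d * q"] by simp
qed

lemma q_binomial_theorem:
  assumes qq: "\<And>m. qpoch q q m \<noteq> 0"
  shows "(\<Sum>k\<le>n. qbinom q n k * (- z) ^ k * q ^ ((n + 1 - k) choose 2)) = (\<Prod>i<n. q ^ Suc i - z)"
proof (induction n)
  case 0
  then show ?case
    by (simp add: qbinom_0_right qq numeral_2_eq_2)
next
  case (Suc n)
  let ?f = "\<lambda>N k. (- z) ^ k * q ^ ((N + 1 - k) choose 2)"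
  have "(\<Sum>k\<le>n. q ^ k * qbinom q n k * ?f (Suc n) k) = q ^ Suc n * (\<Sum>k\<le>n. qbinom q n k * ?f n k)"
    unfolding sum_distrib_left
  proof (rule sum.cong[OF refl])
    fix k assume "k \<in> {..n}"
    then have "Suc n + 1 - k = Suc (n + 1 - k)"
      and "q ^ k * q ^ (Suc (n + 1 - k) choose 2) = q ^ Suc n * q ^ ((n + 1 - k) choose 2)"
      by (simp_all add: choose_2_Suc flip: power_add)
    then show "q ^ k * qbinom q n k * ?f (Suc n) k = q ^ Suc n * (qbinom q n k * ?f n k)"
      by (simp only:) (simp add: mult_ac)
  qed
  moreover have "(\<Sum>k\<le>n. qbinom q n k * ?f (Suc n) (Suc k)) = - z * (\<Sum>k\<le>n. qbinom q n k * ?f n k)"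
    unfolding sum_distrib_left by (rule sum.cong[OF refl]) (simp add: mult_ac)
  ultimately show ?case
    using sum_qbinom_Suc'[OF qq, of n "?f (Suc n)"] Suc.IH by (simp add: algebra_simps)
qed

lemma inverse_qpoch_shift_up:
  assumes qq: "\<And>m. qpoch q q m \<noteq> 0" and c: "qpoch c q (n + N) \<noteq> 0"
  shows "1 / qpoch (c * q ^ n) q N = (\<Sum>k=0..n. qbinom q n k * c ^ k * q ^ (2 * (k choose 2))
            * qpoch (c * q ^ k) q (n - k) * (q ^ k) ^ N / qpoch (c * q ^ k) q N)"
proof -
  define d where "d = c * q ^ N"
  have "(\<Sum>k=0..n. qbinom q n k * c ^ k * q ^ (2 * (k choose 2))
            * qpoch (c * q ^ k) q (n - k) * (q ^ k) ^ N / qpoch (c * q ^ k) q N)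
      = (\<Sum>k\<le>n. qpoch c q n / qpoch c q (n + N)
            * (qbinom q n k * (d ^ k * q ^ (2 * (k choose 2)) * qpoch (d * q ^ k) q (n - k))))"
    unfolding atLeast0AtMost
  proof (rule sum.cong[OF refl])
    fix k assume "k \<in> {..n}"
    then have k: "k \<le> n" by simp
    define A X Y Z where "A = qpoch c q k" and "X = qpoch (c * q ^ k) q (n - k)"
      and "Y = qpoch (c * q ^ k) q N" and "Z = qpoch (d * q ^ k) q (n - k)"
    have "qpoch c q n = A * X"
      using qpoch_add[of c q k "n - k"] k by (simp add: A_def X_def)
    moreover have "qpoch c q (n + N) = A * Y * Z"
      using qpoch_add[of c q "k + N" "n - k"] qpoch_add[of c q k N] k
      by (simp add: A_def Y_def Z_def d_def power_add mult_ac add.commute)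
    moreover have "d ^ k = c ^ k * (q ^ k) ^ N"
      by (simp add: d_def power_mult_distrib mult.commute flip: power_mult)
    ultimately show "qbinom q n k * c ^ k * q ^ (2 * (k choose 2)) * qpoch (c * q ^ k) q (n - k)
          * (q ^ k) ^ N / qpoch (c * q ^ k) q N
        = qpoch c q n / qpoch c q (n + N)
          * (qbinom q n k * (d ^ k * q ^ (2 * (k choose 2)) * qpoch (d * q ^ k) q (n - k)))"
      using c by (simp flip: X_def Y_def Z_def)
  qed
  also have "\<dots> = qpoch c q n / qpoch c q (n + N)"
    by (simp only: sum_qbinom_qpoch_eq_1[OF qq] flip: sum_distrib_left) simp
  also have "\<dots> = 1 / qpoch (c * q ^ n) q N"
    using c by (simp add: qpoch_add)
  finally show ?thesis ..
qed

lemma prod_qpow_diff_eq_qpoch: "(\<Prod>i<n. q ^ Suc i - v * q ^ n) = (\<Prod>i<n. q ^ Suc i) * qpoch v q n"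
proof (induction n arbitrary: v)
  case 0
  then show ?case by simp
next
  case (Suc n)
  have vq: "v * q ^ Suc n = (v * q) * q ^ n"
    by (simp add: mult_ac)
  have "(\<Prod>i<Suc n. q ^ Suc i - v * q ^ Suc n) =
      (\<Prod>i<n. q ^ Suc i - (v * q) * q ^ n) * (q ^ Suc n - v * q ^ Suc n)"
    by (simp only: prod.lessThan_Suc vq)
  also have "\<dots> = (\<Prod>i<n. q ^ Suc i) * qpoch (v * q) q n * (q ^ Suc n - v * q ^ Suc n)"
    by (simp only: Suc.IH)
  also have "qpoch v q (Suc n) = (1 - v) * qpoch (v * q) q n"
    using qpoch_add[of v q 1 n] by (simp add: qpoch_def)
  ultimately show ?case
    by (simp only: prod.lessThan_Suc) (simp add: algebra_simps)
qed

lemma qpoch_reciprocal_mult_power: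
  assumes "c \<noteq> 0"
  shows "qpoch (q / c) q n * (- c) ^ n = (\<Prod>i<n. q ^ Suc i - c)"
proof -
  have "qpoch (q / c) q n * (- c) ^ n = (\<Prod>i<n. (1 - q / c * q ^ i) * (- c))"
    by (simp only: qpoch_def prod.distrib prod_constant card_lessThan)
  also have "\<dots> = (\<Prod>i<n. q ^ Suc i - c)"
    using assms by (intro prod.cong) (auto simp: field_simps)
  finally show ?thesis .
qed

lemma q_binomial_theorem_powi:
  assumes qq: "\<And>m. qpoch q q m \<noteq> 0" and "c \<noteq> 0"
  shows "(\<Sum>k=0..n. qbinom q n k * (- c) powi (int k - int n) * q ^ ((n + 1 - k) choose 2) * (q ^ k) ^ N)
      = (\<Prod>i<n. q ^ Suc i - c * q ^ N) / (- c) ^ n"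
proof -
  have "(\<Sum>k=0..n. qbinom q n k * (- c) powi (int k - int n) * q ^ ((n + 1 - k) choose 2) * (q ^ k) ^ N)
      = (\<Sum>k\<le>n. qbinom q n k * (- (c * q ^ N)) ^ k * q ^ ((n + 1 - k) choose 2)) / (- c) ^ n"
    unfolding atLeast0AtMost sum_divide_distrib
  proof (rule sum.cong[OF refl])
    fix k
    have "(- c) powi (int k - int n) = (- c) ^ k / (- c) ^ n"
      using \<open>c \<noteq> 0\<close> by (simp add: power_int_diff)
    moreover have "(- (c * q ^ N)) ^ k = (- c) ^ k * (q ^ k) ^ N"
      by (metis minus_mult_left power_mult power_mult_distrib mult.commute)
    ultimately show "qbinom q n k * (- c) powi (int k - int n) * q ^ ((n + 1 - k) choose 2) * (q ^ k) ^ N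
        = qbinom q n k * (- (c * q ^ N)) ^ k * q ^ ((n + 1 - k) choose 2) / (- c) ^ n"
      by simp
  qed
  then show ?thesis
    by (simp only: q_binomial_theorem[OF qq])
qed

lemma inverse_qpoch_shift_down:
  assumes qq: "\<And>m. qpoch q q m \<noteq> 0" and "q \<noteq> 0" "c \<noteq> 0"
    and c: "qpoch c q N \<noteq> 0" and shifted: "qpoch (c / q ^ n) q N \<noteq> 0"
    and reciprocal: "qpoch (q / c) q n \<noteq> 0"
  shows "1 / qpoch (c / q ^ n) q N = (\<Sum>k=0..n. qbinom q n k * (- c) powi (int k - int n)
            * q ^ ((n + 1 - k) choose 2) / qpoch (q / c) q n * (q ^ k) ^ N / qpoch c q N)"
proof -
  define u where "u = c / q ^ n"
  define Q where "Q = (\<Prod>i<n. q ^ Suc i)"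
  have c_eq: "c = u * q ^ n"
    using \<open>q \<noteq> 0\<close> by (simp add: u_def)
  have "Q \<noteq> 0"
    using \<open>q \<noteq> 0\<close> by (simp add: Q_def)
  have denominator: "qpoch (q / c) q n * (- c) ^ n = Q * qpoch u q n"
    using qpoch_reciprocal_mult_power[OF \<open>c \<noteq> 0\<close>] prod_qpow_diff_eq_qpoch[of q u n]
    by (simp only: Q_def c_eq)
  have numerator: "(\<Prod>i<n. q ^ Suc i - c * q ^ N) = Q * qpoch (u * q ^ N) q n"
    using prod_qpow_diff_eq_qpoch[of q "u * q ^ N" n] by (simp add: Q_def c_eq mult_ac)
  have split: "qpoch u q n * qpoch c q N = qpoch u q N * qpoch (u * q ^ N) q n"
    using qpoch_add[of u q n N] qpoch_add[of u q N n] by (simp add: c_eq add.commute)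
  have "qpoch u q n \<noteq> 0"
    using denominator \<open>c \<noteq> 0\<close> reciprocal by auto
  then have "qpoch (u * q ^ N) q n \<noteq> 0"
    using split c by auto
  have "(\<Sum>k=0..n. qbinom q n k * (- c) powi (int k - int n) * q ^ ((n + 1 - k) choose 2)
            / qpoch (q / c) q n * (q ^ k) ^ N / qpoch c q N)
      = (\<Sum>k=0..n. qbinom q n k * (- c) powi (int k - int n) * q ^ ((n + 1 - k) choose 2) * (q ^ k) ^ N)
          / (qpoch (q / c) q n * qpoch c q N)"
    by (simp add: sum_divide_distrib mult_ac)
  also have "\<dots> = Q * qpoch (u * q ^ N) q n / (- c) ^ n / (qpoch (q / c) q n * qpoch c q N)"
    by (simp only: q_binomial_theorem_powi[OF qq \<open>c \<noteq> 0\<close>] numerator)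
  also have "\<dots> = 1 / qpoch u q N"
    using denominator split \<open>Q \<noteq> 0\<close> \<open>qpoch (u * q ^ N) q n \<noteq> 0\<close> shifted
    by (simp add: u_def field_simps)
  finally show ?thesis
    by (simp add: u_def)
qed

section \<open>Absolute convergence of the double series\<close>

lemma norm_1_minus_mult_power_bounded_below:
  fixes q z :: "'a::real_normed_div_algebra"
  assumes "norm q < 1" and nonzero: "\<And>j. 1 - z * q ^ j \<noteq> 0"
  shows "\<exists>\<delta>>0. \<forall>j. \<delta> \<le> norm (1 - z * q ^ j)"
proof -
  have "(\<lambda>j. z * q ^ j) \<longlonglongrightarrow> z * 0"
    by (intro tendsto_mult_left LIMSEQ_power_zero assms(1))
  then have "(\<lambda>j. norm (1 - z * q ^ j)) \<longlonglongrightarrow> norm (1 - z * 0)"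
    by (intro tendsto_norm tendsto_diff tendsto_const)
  then have "eventually (\<lambda>j. 1 / 2 < norm (1 - z * q ^ j)) sequentially"
    by (rule order_tendstoD) simp
  then obtain J where J: "\<And>j. J \<le> j \<Longrightarrow> 1 / 2 < norm (1 - z * q ^ j)"
    by (auto simp: eventually_sequentially)
  define \<delta> where "\<delta> = Min (insert (1 / 2) ((\<lambda>j. norm (1 - z * q ^ j)) ` {..<J}))"
  have "\<delta> > 0"
    using nonzero by (simp add: \<delta>_def)
  moreover have "\<delta> \<le> norm (1 - z * q ^ j)" for j
  proof (cases "j < J")
    case True
    then show ?thesis by (simp add: \<delta>_def)
  next
    case False
    have "\<delta> \<le> 1 / 2"
      unfolding \<delta>_def by (rule Min_le) auto
    then show ?thesis
      using J[of j] False by linarith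
  qed
  ultimately show ?thesis
    by blast
qed

lemma summable_on_geometric_product:
  fixes u v :: real
  assumes "0 \<le> u" "u < 1" "0 \<le> v" "v < 1"
  shows "(\<lambda>(i, j). u ^ i * v ^ j) summable_on (UNIV :: (nat \<times> nat) set)"
proof -
  have geometric: "((\<lambda>j. t ^ j) has_sum 1 / (1 - t)) UNIV" if "0 \<le> t" "t < 1" for t :: real
    using geometric_sums[of t] that by (intro sums_nonneg_imp_has_sum) auto
  have "(\<lambda>p. u ^ fst p * v ^ snd p) summable_on Sigma UNIV (\<lambda>_. UNIV)"
  proof (rule summable_on_SigmaI)
    show "((\<lambda>j. u ^ fst (i, j) * v ^ snd (i, j)) has_sum u ^ i * (1 / (1 - v))) UNIV" for i
      using has_sum_cmult_right[OF geometric[of v]] assms by simp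
    show "(\<lambda>i. u ^ i * (1 / (1 - v))) summable_on UNIV"
      using has_sum_cmult_left[OF geometric[of u], of "1 / (1 - v)"] assms
      unfolding summable_on_def by blast
  qed (use assms in auto)
  then show ?thesis
    by (simp add: case_prod_unfold)
qed

lemma norm_qpoch_le:
  assumes "norm q \<le> 1"
  shows "norm (qpoch z q m) \<le> (1 + norm z) ^ m"
proof -
  have "norm (qpoch z q m) \<le> (\<Prod>j<m. norm (1 - z * q ^ j))"
    unfolding qpoch_def by (rule norm_prod_le)
  also have "\<dots> \<le> (\<Prod>j<m. 1 + norm z)"
  proof (rule prod_mono)
    fix j
    have "norm (z * q ^ j) \<le> norm z"
      using assms by (simp add: norm_mult norm_power mult_left_le power_le_one)
    then show "0 \<le> norm (1 - z * q ^ j) \<and> norm (1 - z * q ^ j) \<le> 1 + norm z"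
      using norm_triangle_ineq4[of 1 "z * q ^ j"] by simp
  qed
  finally show ?thesis
    by simp
qed

lemma norm_qpoch_ge:
  assumes "0 \<le> \<delta>" and "\<And>j. \<delta> \<le> norm (1 - z * q ^ j)"
  shows "\<delta> ^ m \<le> norm (qpoch z q m)"
proof -
  have "\<delta> ^ m \<le> (\<Prod>j<m. norm (1 - z * q ^ j))"
    using prod_mono[of "{..<m}" "\<lambda>_. \<delta>"] assms by simp
  then show ?thesis
    by (simp add: qpoch_def prod_norm)
qed

definition qAppell1_term ::
    "complex \<Rightarrow> complex \<Rightarrow> complex \<Rightarrow> complex \<Rightarrow> complex \<Rightarrow> complex \<Rightarrow> complex \<Rightarrow>
      nat \<times> nat \<Rightarrow> complex"
  where "qAppell1_term q a b b' c x y = (\<lambda>(i, j). qpoch a q (i + j) * qpoch b q i * qpoch b' q j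
        / (qpoch q q i * qpoch q q j * qpoch c q (i + j)) * x ^ i * y ^ j)"

lemma qAppell1_eq_infsum: "qAppell1 q a b b' c x y = infsum (qAppell1_term q a b b' c x y) UNIV"
  by (simp add: qAppell1_def qAppell1_term_def)

lemma norm_qAppell1_term_le:
  assumes "norm q \<le> 1" and "0 < \<delta>"
    and "\<And>j. \<delta> \<le> norm (1 - q * q ^ j)" and "\<And>j. \<delta> \<le> norm (1 - c * q ^ j)"
  shows "norm (qAppell1_term q a b b' c x y (i, j)) \<le>
    (norm x * ((1 + norm a) * (1 + norm b) / \<delta>\<^sup>2)) ^ i
      * (norm y * ((1 + norm a) * (1 + norm b') / \<delta>\<^sup>2)) ^ j"
proof -
  have "norm (qpoch a q (i + j) * qpoch b q i * qpoch b' q j) \<le>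
      (1 + norm a) ^ (i + j) * (1 + norm b) ^ i * (1 + norm b') ^ j"
    unfolding norm_mult using assms(1) by (intro mult_mono norm_qpoch_le) auto
  moreover have "\<delta> ^ i * \<delta> ^ j * \<delta> ^ (i + j) \<le> norm (qpoch q q i * qpoch q q j * qpoch c q (i + j))"
    unfolding norm_mult using assms by (intro mult_mono norm_qpoch_ge) auto
  ultimately have "norm (qAppell1_term q a b b' c x y (i, j)) \<le>
      (1 + norm a) ^ (i + j) * (1 + norm b) ^ i * (1 + norm b') ^ j / (\<delta> ^ i * \<delta> ^ j * \<delta> ^ (i + j))
        * norm x ^ i * norm y ^ j"
    unfolding qAppell1_term_def using \<open>0 < \<delta>\<close>
    by (auto simp: norm_mult norm_divide norm_power intro!: mult_right_mono frac_le)
  also have "\<dots> = (norm x * ((1 + norm a) * (1 + norm b) / \<delta>\<^sup>2)) ^ i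
      * (norm y * ((1 + norm a) * (1 + norm b') / \<delta>\<^sup>2)) ^ j"
    by (simp add: power_add power_mult_distrib power_divide power2_eq_square mult_ac)
  finally show ?thesis .
qed

lemma qAppell1_term_summable_near_0:
  assumes q: "norm q < 1" and c: "\<And>m. qpoch c q m \<noteq> 0"
  shows "\<exists>r>0. \<forall>m x y. norm x < r \<longrightarrow> norm y < r \<longrightarrow>
    qAppell1_term q a b b' (c * q ^ m) x y summable_on UNIV"
proof -
  obtain \<delta>\<^sub>q where \<delta>\<^sub>q: "\<delta>\<^sub>q > 0" "\<forall>j. \<delta>\<^sub>q \<le> norm (1 - q * q ^ j)"
    using norm_1_minus_mult_power_bounded_below[OF q, of q] qpoch_q_q_nonzero[OF q] qpoch_factor_nonzero by blast
  obtain \<delta>\<^sub>c where \<delta>\<^sub>c: "\<delta>\<^sub>c > 0" "\<forall>j. \<delta>\<^sub>c \<le> norm (1 - c * q ^ j)"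
    using norm_1_minus_mult_power_bounded_below[OF q, of c] c qpoch_factor_nonzero by blast
  define \<delta> where "\<delta> = min \<delta>\<^sub>q \<delta>\<^sub>c"
  define M\<^sub>x M\<^sub>y where "M\<^sub>x = (1 + norm a) * (1 + norm b) / \<delta>\<^sup>2"
    and "M\<^sub>y = (1 + norm a) * (1 + norm b') / \<delta>\<^sup>2"
  have "\<delta> > 0"
    using \<delta>\<^sub>q \<delta>\<^sub>c by (simp add: \<delta>_def)
  then have M: "M\<^sub>x > 0" "M\<^sub>y > 0"
    by (simp_all add: M\<^sub>x_def M\<^sub>y_def add_pos_nonneg)
  define r where "r = 1 / (M\<^sub>x + M\<^sub>y)"
  have "qAppell1_term q a b b' (c * q ^ m) x y summable_on UNIV"
    if "norm x < r" "norm y < r" for m x y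
  proof -
    have "norm x * M\<^sub>x < 1" "norm y * M\<^sub>y < 1"
      using that M mult_nonneg_nonneg[of M\<^sub>y "norm x"] mult_nonneg_nonneg[of M\<^sub>x "norm y"]
      by (simp_all add: r_def field_simps del: mult_nonneg_nonneg)
    have "\<delta> \<le> norm (1 - q * q ^ j)" "\<delta> \<le> norm (1 - c * q ^ m * q ^ j)" for j
      using \<delta>\<^sub>q(2)[rule_format, of j] \<delta>\<^sub>c(2)[rule_format, of "m + j"]
      unfolding \<delta>_def by (simp_all add: power_add mult.assoc)
    then have bound: "norm (qAppell1_term q a b b' (c * q ^ m) x y (i, j))
        \<le> (norm x * M\<^sub>x) ^ i * (norm y * M\<^sub>y) ^ j" for i j
      unfolding M\<^sub>x_def M\<^sub>y_def using q \<open>\<delta> > 0\<close> by (intro norm_qAppell1_term_le) auto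
    then have "(\<lambda>p. norm (qAppell1_term q a b b' (c * q ^ m) x y p)) summable_on UNIV"
    proof (intro summable_on_comparison_test[OF summable_on_geometric_product] norm_ge_zero)
      fix p :: "nat \<times> nat"
      show "norm (qAppell1_term q a b b' (c * q ^ m) x y p)
          \<le> (case p of (i, j) \<Rightarrow> (norm x * M\<^sub>x) ^ i * (norm y * M\<^sub>y) ^ j)"
        using bound by (cases p) simp
    qed (use \<open>norm x * M\<^sub>x < 1\<close> \<open>norm y * M\<^sub>y < 1\<close> M in auto)
    then show ?thesis
      by (rule abs_summable_summable)
  qed
  moreover have "r > 0"
    using M by (simp add: r_def)
  ultimately show ?thesis
    by blast
qed

section \<open>Linearity in the factor 1 / (c; q)\<close>

lemma has_sum_sum_family:
  fixes f :: "'k \<Rightarrow> 'a \<Rightarrow> 'b::topological_comm_monoid_add"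
  assumes "finite K" and "\<And>k. k \<in> K \<Longrightarrow> (f k has_sum s k) A"
  shows "((\<lambda>x. \<Sum>k\<in>K. f k x) has_sum (\<Sum>k\<in>K. s k)) A"
  using assms
proof (induction K rule: finite_induct)
  case (insert k K)
  then have "(f k has_sum s k) A" and "((\<lambda>x. \<Sum>k\<in>K. f k x) has_sum (\<Sum>k\<in>K. s k)) A"
    by auto
  then show ?case
    using insert.hyps by (simp add: has_sum_add)
qed simp

lemma qAppell1_linear_combination:
  assumes "finite K"
    and inverse_qpoch: "\<And>N. 1 / qpoch c q N = (\<Sum>k\<in>K. w k * s k ^ N / qpoch (d k) q N)"
    and summable: "\<And>k. k \<in> K \<Longrightarrow>
      qAppell1_term q a b b' (d k) (x * s k) (y * s k) summable_on UNIV"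
  shows "qAppell1 q a b b' c x y = (\<Sum>k\<in>K. w k * qAppell1 q a b b' (d k) (x * s k) (y * s k))"
proof -
  have "qAppell1_term q a b b' c x y =
      (\<lambda>p. \<Sum>k\<in>K. w k * qAppell1_term q a b b' (d k) (x * s k) (y * s k) p)"
  proof
    fix p :: "nat \<times> nat"
    obtain i j where p: "p = (i, j)"
      by (cases p)
    define H where "H = qpoch a q (i + j) * qpoch b q i * qpoch b' q j / (qpoch q q i * qpoch q q j)"
    have "qAppell1_term q a b b' c x y p = H * x ^ i * y ^ j * (1 / qpoch c q (i + j))"
      by (simp add: p qAppell1_term_def H_def)
    also have "\<dots> = (\<Sum>k\<in>K. H * x ^ i * y ^ j * (w k * s k ^ (i + j) / qpoch (d k) q (i + j)))"
      by (simp only: inverse_qpoch sum_distrib_left)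
    also have "\<dots> = (\<Sum>k\<in>K. w k * qAppell1_term q a b b' (d k) (x * s k) (y * s k) p)"
      by (simp add: p qAppell1_term_def H_def power_mult_distrib power_add mult_ac)
    finally show "qAppell1_term q a b b' c x y p =
        (\<Sum>k\<in>K. w k * qAppell1_term q a b b' (d k) (x * s k) (y * s k) p)" .
  qed
  then have "(qAppell1_term q a b b' c x y has_sum
      (\<Sum>k\<in>K. w k * qAppell1 q a b b' (d k) (x * s k) (y * s k))) UNIV"
    unfolding qAppell1_eq_infsum using \<open>finite K\<close> summable
    by (auto intro!: has_sum_sum_family has_sum_cmult_right)
  then show ?thesis
    unfolding qAppell1_eq_infsum by (rule infsumI)
qed

lemma qAppell1_linear_combination_near_0:
  assumes q: "norm q < 1" and c: "\<And>m. qpoch c q m \<noteq> 0" and "finite K"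
    and inverse_qpoch: "\<And>N. 1 / qpoch c\<^sub>0 q N = (\<Sum>k\<in>K. w k * (q ^ k) ^ N / qpoch (c * q ^ e k) q N)"
  shows "\<exists>r>0. \<forall>x y. norm x < r \<and> norm y < r \<longrightarrow>
    qAppell1 q a b b' c\<^sub>0 x y = (\<Sum>k\<in>K. w k * qAppell1 q a b b' (c * q ^ e k) (x * q ^ k) (y * q ^ k))"
proof -
  obtain r where "r > 0" and summable: "\<forall>m x y. norm x < r \<longrightarrow> norm y < r \<longrightarrow>
      qAppell1_term q a b b' (c * q ^ m) x y summable_on UNIV"
    using qAppell1_term_summable_near_0[OF q c] by blast
  have "qAppell1 q a b b' c\<^sub>0 x y = (\<Sum>k\<in>K. w k * qAppell1 q a b b' (c * q ^ e k) (x * q ^ k) (y * q ^ k))"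
    if "norm x < r" "norm y < r" for x y
  proof (rule qAppell1_linear_combination[OF \<open>finite K\<close> inverse_qpoch])
    have "norm (z * q ^ k) \<le> norm z" for z k
      using q by (simp add: norm_mult norm_power mult_left_le power_le_one)
    then show "qAppell1_term q a b b' (c * q ^ e k) (x * q ^ k) (y * q ^ k) summable_on UNIV" for k
      using summable that by (meson order.strict_trans1)
  qed
  with \<open>r > 0\<close> show ?thesis
    by blast
qed

lemma qAppell1_c_div_qpow:
  assumes q: "norm q < 1" "q \<noteq> 0" and "c \<noteq> 0"
    and "\<And>m. qpoch (c / q ^ n) q m \<noteq> 0" and c: "\<And>m. qpoch c q m \<noteq> 0"
    and "qpoch (q / c) q n \<noteq> 0"
  shows "\<exists>r>0. \<forall>x y. norm x < r \<and> norm y < r \<longrightarrow>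
    qAppell1 q a b b' (c / q ^ n) x y =
      1 / qpoch (q / c) q n *
      (\<Sum>k=0..n. qbinom q n k * (- c) powi (int k - int n) * q ^ ((n + 1 - k) choose 2)
          * qAppell1 q a b b' c (x * q ^ k) (y * q ^ k))"
proof -
  have "1 / qpoch (c / q ^ n) q N = (\<Sum>k=0..n. qbinom q n k * (- c) powi (int k - int n)
      * q ^ ((n + 1 - k) choose 2) / qpoch (q / c) q n * (q ^ k) ^ N / qpoch (c * q ^ 0) q N)" for N
    using inverse_qpoch_shift_down[OF qpoch_q_q_nonzero[OF q(1)]] assms by simp
  from qAppell1_linear_combination_near_0[OF q(1) c _ this] show ?thesis
    by (simp add: sum_distrib_left mult_ac)
qed

lemma qAppell1_c_mult_qpow:
  assumes q: "norm q < 1" and c: "\<And>m. qpoch c q m \<noteq> 0"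
  shows "\<exists>r>0. \<forall>x y. norm x < r \<and> norm y < r \<longrightarrow>
    qAppell1 q a b b' (c * q ^ n) x y =
      (\<Sum>k=0..n. qbinom q n k * c ^ k * q ^ (2 * (k choose 2)) * qpoch (c * q ^ k) q (n - k)
          * qAppell1 q a b b' (c * q ^ k) (x * q ^ k) (y * q ^ k))"
  using qAppell1_linear_combination_near_0[OF q c _ inverse_qpoch_shift_up[OF qpoch_q_q_nonzero[OF q] c]]
  by simp

theorem theorem5:
  fixes q a b b' c :: complex and n :: nat
  assumes "0 < norm q" and "norm q < 1"
  shows "(c \<noteq> 0 \<and> (\<forall>m. qpoch (c / q ^ n) q m \<noteq> 0) \<and> (\<forall>m. qpoch c q m \<noteq> 0)
           \<and> qpoch (q / c) q n \<noteq> 0 \<longrightarrow>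
          (\<exists>r>0. \<forall>x y. norm x < r \<and> norm y < r \<longrightarrow>
             qAppell1 q a b b' (c / q ^ n) x y =
               1 / qpoch (q / c) q n *
               (\<Sum>k=0..n. qbinom q n k * (- c) powi (int k - int n) * q ^ ((n + 1 - k) choose 2)
                   * qAppell1 q a b b' c (x * q ^ k) (y * q ^ k))))
       \<and> ((\<forall>m. qpoch c q m \<noteq> 0) \<longrightarrow>
          (\<exists>r>0. \<forall>x y. norm x < r \<and> norm y < r \<longrightarrow>
             qAppell1 q a b b' (c * q ^ n) x y =
               (\<Sum>k=0..n. qbinom q n k * c ^ k * q ^ (2 * (k choose 2)) * qpoch (c * q ^ k) q (n - k)
                   * qAppell1 q a b b' (c * q ^ k) (x * q ^ k) (y * q ^ k))))"
  using qAppell1_c_div_qpow[OF assms(2)] qAppell1_c_mult_qpow[OF assms(2)] assms(1) by auto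

end
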